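(* For every positive integer $n$ and every complex number $q$ with $0<|q|<1$, \[ \sum_{k=1}^{n}q^{2k}[8k+1]\frac{(q;q^2)_{k}^2(q;q^2)_{2k}}{(q^2;q^2)_{2k}(q^6;q^6)_{k}^2}\frac{(q^{3+6n},q^{-6n};q^6)_k}{(q^{3+6n},q^{-6n};q^2)_k}\sum_{i=1}^{k}\left\{\frac{q^{2i-1}}{[2i-1]^2}-\frac{q^{6i}}{[6i]^2}\right\} =\frac{(q^3;q^2)_{3n}(q^3;q^6)_{n}}{(q^2;q^2)_{3n}(q^6;q^6)_{n}}\sum_{j=1}^{2n}(-1)^{j-1}\frac{q^{3j}}{[3j]^2}. \]
   Context: For complex $x,q$ and an integer $n\ge 0$, $(x;q)_n=\prod_{i=0}^{n-1}(1-xq^i)$, and $(x_1,\dots,x_r;q)_n=(x_1;q)_n\cdots(x_r;q)_n$. The $q$-integer is $[n]=1+q+\cdots+q^{n-1}=(1-q^n)/(1-q)$. *)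

theory Defs
  imports Complex_Main
begin

definition qpoch :: "complex \<Rightarrow> complex \<Rightarrow> nat \<Rightarrow> complex" where
  "qpoch x q n = (\<Prod>i<n. 1 - x * q ^ i)"

definition qint :: "complex \<Rightarrow> nat \<Rightarrow> complex" where
  "qint q n = (1 - q ^ n) / (1 - q)"

end

theory Submission
  imports Defs
begin

text \<open>
  Let F(n,k) be the k-th summand on the left without its inner sum H(k), divided by the
  prefactor on the right. With G(n,k) = F(n+1,k) R(q^(2k), q^(6n)) for an explicit rational
  certificate R, the pair (F, G) is a WZ pair: F(n+1,k) - F(n,k) = G(n,k+1) - G(n,k). As F(n,k)
  vanishes for k > n, summing over k shows that the sum of F(n,k) over k does not depend on n,
  so it is 1. The same certificate also satisfies
    G(n,k+1) b(k) - G(n,k) a(k) = F(n+1,k) f(n) - F(n,k) e(n)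
  with a(k) = q^(6k)/[6k]^2, b(k) = q^(2k+1)/[2k+1]^2, e(n) = q^(6n+3)/[6n+3]^2,
  f(n) = q^(6n+6)/[6n+6]^2, and H(k+1) = H(k) + b(k) - a(k+1). Then G(n,k) (H(k) + a(k) - e(n))
  telescopes, so the sum of F(n,k) H(k) over k grows from n to n+1 by e(n) - f(n), which are the
  two new terms of the alternating sum on the right. All these identities reduce to polynomial
  identities in q, X = q^(2k) and Y = q^(6n); the denominators do not vanish because
  q^a \<noteq> q^b for a \<noteq> b when 0 < |q| < 1.
\<close>

lemma wz_weighted_sum_Suc:
  fixes F G :: "nat \<Rightarrow> nat \<Rightarrow> 'a::comm_ring"
  assumes wz: "\<And>k. k \<le> Suc n \<Longrightarrow> F (Suc n) k - F n k = G n (Suc k) - G n k"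
    and cert: "\<And>k. k \<le> Suc n \<Longrightarrow> G n (Suc k) * b k - G n k * a k = F (Suc n) k * f - F n k * e"
    and H_Suc: "\<And>k. H (Suc k) = H k + b k - a (Suc k)"
    and F_top: "F n (Suc n) = 0" and G_0: "G n 0 = 0" and G_top: "G n (Suc (Suc n)) = 0"
  shows "(\<Sum>k=0..Suc n. F (Suc n) k * H k)
           = (\<Sum>k=0..n. F n k * H k) + (e - f) * (\<Sum>k=0..Suc n. F (Suc n) k)"
proof -
  define W where "W k = G n k * (H k + a k - e)" for k
  have telescope: "(F (Suc n) k - F n k) * H k - (e - f) * F (Suc n) k = W (Suc k) - W k"
    if "k \<le> Suc n" for k
  proof -
    have "W (Suc k) - W k = (G n (Suc k) - G n k) * (H k - e) + (G n (Suc k) * b k - G n k * a k)"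
      unfolding W_def H_Suc by (simp add: algebra_simps)
    also have "\<dots> = (F (Suc n) k - F n k) * (H k - e) + (F (Suc n) k * f - F n k * e)"
      by (simp only: wz[OF that] cert[OF that])
    finally show ?thesis by (simp add: algebra_simps)
  qed
  have "(\<Sum>k=0..Suc n. (F (Suc n) k - F n k) * H k - (e - f) * F (Suc n) k)
        = (\<Sum>k=0..Suc n. W (Suc k) - W k)"
    by (rule sum.cong) (simp_all add: telescope)
  also have "\<dots> = 0"
    by (simp only: sum_Suc_diff[OF le0]) (simp add: W_def G_0 G_top)
  finally have "(\<Sum>k=0..Suc n. F (Suc n) k * H k) - (\<Sum>k=0..Suc n. F n k * H k)
                  - (e - f) * (\<Sum>k=0..Suc n. F (Suc n) k) = 0"
    by (simp only: sum_subtractf left_diff_distrib sum_distrib_left)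
  moreover have "(\<Sum>k=0..Suc n. F n k * H k) = (\<Sum>k=0..n. F n k * H k)"
    using F_top by simp
  ultimately show ?thesis
    by (simp add: algebra_simps)
qed

lemma wz_sum_Suc:
  fixes F G :: "nat \<Rightarrow> nat \<Rightarrow> 'a::comm_ring_1"
  assumes "\<And>k. k \<le> Suc n \<Longrightarrow> F (Suc n) k - F n k = G n (Suc k) - G n k"
    and "F n (Suc n) = 0" and "G n 0 = 0" and "G n (Suc (Suc n)) = 0"
  shows "(\<Sum>k=0..Suc n. F (Suc n) k) = (\<Sum>k=0..n. F n k)"
  using wz_weighted_sum_Suc[where F = F and G = G and n = n and H = "\<lambda>_. 1"
                              and a = "\<lambda>_. 0" and b = "\<lambda>_. 0" and e = 0 and f = 0]
    assms by simp

lemma qpoch_0 [simp]: "qpoch x p 0 = 1"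
  by (simp add: qpoch_def)

lemma qpoch_Suc: "qpoch x p (Suc k) = qpoch x p k * (1 - x * p ^ k)"
  by (simp add: qpoch_def)

lemma qpoch_add: "qpoch x p (m + k) = qpoch x p m * qpoch (x * p ^ m) p k"
  by (induction k) (simp_all add: qpoch_Suc power_add mult_ac)

lemma qpoch_swap: "qpoch x p k * qpoch (x * p ^ k) p m = qpoch x p m * qpoch (x * p ^ m) p k"
  by (metis qpoch_add add.commute)

lemma qpoch_1: "qpoch x p 1 = 1 - x"
  by (simp add: qpoch_def)

lemma qpoch_3: "qpoch x p 3 = (1 - x) * (1 - x * p) * (1 - x * p ^ 2)"
  by (simp add: qpoch_def numeral_3_eq_3 lessThan_Suc power2_eq_square mult_ac)

lemma qpoch_nonzero: "(\<And>i. i < k \<Longrightarrow> x * p ^ i \<noteq> 1) \<Longrightarrow> qpoch x p k \<noteq> 0"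
  unfolding qpoch_def by (auto simp: prod_zero_iff)

lemma qpoch_eq_0: "i < k \<Longrightarrow> x * p ^ i = 1 \<Longrightarrow> qpoch x p k = 0"
  unfolding qpoch_def by (rule prod_zero) auto

lemma power_eq_power_iff_norm_less_1:
  fixes z :: "'a::real_normed_div_algebra"
  assumes "z \<noteq> 0" and "norm z < 1"
  shows "z ^ a = z ^ b \<longleftrightarrow> a = b"
proof
  show "a = b" if eq: "z ^ a = z ^ b"
  proof (rule ccontr)
    have less: "z ^ i \<noteq> z ^ j" if "i < j" for i j
    proof
      assume "z ^ i = z ^ j"
      also have "z ^ j = z ^ i * z ^ (j - i)"
        using \<open>i < j\<close> by (simp flip: power_add)
      finally have "z ^ i * 1 = z ^ i * z ^ (j - i)"
        by simp
      then have "z ^ (j - i) = 1"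
        using \<open>z \<noteq> 0\<close> by simp
      then have "norm z ^ (j - i) = 1"
        by (metis norm_one norm_power)
      moreover have "norm z ^ (j - i) < 1"
        using \<open>i < j\<close> assms by (intro power_less_one_iff[THEN iffD2]) auto
      ultimately show False
        by simp
    qed
    assume "a \<noteq> b"
    then show False
      using less[of a b] less[of b a] eq by (cases "a < b") auto
  qed
qed simp

definition wz_U :: "complex \<Rightarrow> nat \<Rightarrow> complex" where
  "wz_U q k = q ^ (2*k) * qint q (8*k+1) * (qpoch q (q^2) k ^ 2 * qpoch q (q^2) (2*k))
                / (qpoch (q^2) (q^2) (2*k) * qpoch (q^6) (q^6) k ^ 2)"

definition wz_V :: "complex \<Rightarrow> nat \<Rightarrow> nat \<Rightarrow> complex" where
  "wz_V q n k = (qpoch (q ^ (3+6*n)) (q^6) k * qpoch (inverse (q ^ (6*n))) (q^6) k)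
                  / (qpoch (q ^ (3+6*n)) (q^2) k * qpoch (inverse (q ^ (6*n))) (q^2) k)"

definition wz_C :: "complex \<Rightarrow> nat \<Rightarrow> complex" where
  "wz_C q n = (qpoch (q^3) (q^2) (3*n) * qpoch (q^3) (q^6) n)
                / (qpoch (q^2) (q^2) (3*n) * qpoch (q^6) (q^6) n)"

definition wz_F :: "complex \<Rightarrow> nat \<Rightarrow> nat \<Rightarrow> complex" where
  "wz_F q n k = wz_U q k * wz_V q n k / wz_C q n"

text \<open>
  Rational functions of X = q^(2k) and Y = q^(6n): f_shift is wz_F q n k / wz_F q (Suc n) k,
  wz_cert defines wz_G q n k = wz_F q (Suc n) k * wz_cert q X Y, and wz_cert_next is
  wz_G q n (Suc k) / wz_F q (Suc n) k. cert_scaled is wz_cert times X^3/(1-X^3)^2, which is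
  harm_term q (6k) / (1-q)^2; unlike that product it has no pole at X = 1.
\<close>

definition f_shift :: "complex \<Rightarrow> complex \<Rightarrow> complex \<Rightarrow> complex" where
  "f_shift q X Y =
     ((1-q^3*Y)*(q^6*Y-X^3)*((1-q^3*Y*X)*(1-q^5*Y*X)*(1-q^7*Y*X))*((q^4*Y-1)*(q^2*Y-1))*(1-q^3*Y))
     / ((1-q^3*Y*X^3)*((q^6*Y-X)*(q^4*Y-X)*(q^2*Y-X))*((1-q^2*Y)*(1-q^4*Y)*(1-q^6*Y)^2))"

definition cert_scaled :: "complex \<Rightarrow> complex \<Rightarrow> complex \<Rightarrow> complex" where
  "cert_scaled q X Y = - (q^4*Y*(1-q^9*Y^2)*(q^2-X^2)*(1-X^2)*X^2*(1-q^7*X*Y))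
     / ((1-q*X^4)*(1-q^6*Y)^2*(q^6*Y-X)*(q^4*Y-X)*(1-q^3*X^3*Y))"

definition wz_cert :: "complex \<Rightarrow> complex \<Rightarrow> complex \<Rightarrow> complex" where
  "wz_cert q X Y = cert_scaled q X Y * (1-X^3)^2 / X^3"

definition wz_cert_next :: "complex \<Rightarrow> complex \<Rightarrow> complex \<Rightarrow> complex" where
  "wz_cert_next q X Y = - (q^2*Y*(1-q^9*Y^2)*(1-q*X)^2*(1-q*X^2)*(1-q^3*X^2)*(q^6*Y-X^3))
     / (X*(1-q*X^4)*(q^6*Y-X)*(1-q^6*Y)^2*(q^4*Y-X)*(q^2*Y-X))"

lemma divide_times_multiple:
  fixes N D M m :: "'a::field"
  assumes "D \<noteq> 0" and "M = D * m"
  shows "N / D * M = N * m"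
  using assms by simp

lemma wz_cert_identity:
  fixes q X Y :: complex
  assumes nz: "X \<noteq> 0" "1-q*X^4 \<noteq> 0" "1-q^6*Y \<noteq> 0" "q^6*Y-X \<noteq> 0" "q^4*Y-X \<noteq> 0"
    "q^2*Y-X \<noteq> 0" "1-q^3*X^3*Y \<noteq> 0" "1-q^2*Y \<noteq> 0" "1-q^4*Y \<noteq> 0"
  shows "1 - f_shift q X Y = wz_cert_next q X Y - wz_cert q X Y"
proof -
  define M where "M = X^3*(1-q*X^4)*(1-q^6*Y)^2*((q^6*Y-X)*(q^4*Y-X)*(q^2*Y-X))*(1-q^3*X^3*Y)
                      *(1-q^2*Y)*(1-q^4*Y)"
  have "M \<noteq> 0"
    unfolding M_def using nz by simp
  have e3: "1-q^3*Y*X^3 = 1-q^3*X^3*Y"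
    by (simp add: ac_simps)
  have f: "f_shift q X Y * M = ((1-q^3*Y)*(q^6*Y-X^3)*((1-q^3*Y*X)*(1-q^5*Y*X)*(1-q^7*Y*X))
             *((q^4*Y-1)*(q^2*Y-1))*(1-q^3*Y)) * (X^3*(1-q*X^4))"
    unfolding f_shift_def e3
    by (rule divide_times_multiple, use nz in simp, simp only: M_def mult_ac power2_eq_square power3_eq_cube)
  have t: "wz_cert_next q X Y * M = (- (q^2*Y*(1-q^9*Y^2)*(1-q*X)^2*(1-q*X^2)*(1-q^3*X^2)*(q^6*Y-X^3)))
             * (X^2*(1-q^3*X^3*Y)*(1-q^2*Y)*(1-q^4*Y))"
    unfolding wz_cert_next_def
    by (rule divide_times_multiple, use nz in simp, simp only: M_def mult_ac power2_eq_square power3_eq_cube)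
  have s: "wz_cert q X Y * M = (- (q^4*Y*(1-q^9*Y^2)*(q^2-X^2)*(1-X^2)*X^2*(1-q^7*X*Y)) * (1-X^3)^2)
             * ((q^2*Y-X)*(1-q^2*Y)*(1-q^4*Y))"
  proof -
    have e: "wz_cert q X Y = (- (q^4*Y*(1-q^9*Y^2)*(q^2-X^2)*(1-X^2)*X^2*(1-q^7*X*Y)) * (1-X^3)^2)
            / (((1-q*X^4)*(1-q^6*Y)^2*(q^6*Y-X)*(q^4*Y-X)*(1-q^3*X^3*Y)) * X^3)"
      unfolding wz_cert_def cert_scaled_def by (simp only: times_divide_eq_left divide_divide_eq_left)
    show ?thesis
      unfolding e
      by (rule divide_times_multiple, use nz in simp, simp only: M_def mult_ac power2_eq_square power3_eq_cube)
  qed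
  have "(1 - f_shift q X Y) * M = (wz_cert_next q X Y - wz_cert q X Y) * M"
    unfolding left_diff_distrib f t s unfolding M_def by algebra
  then show ?thesis
    using \<open>M \<noteq> 0\<close> by simp
qed

lemma harmonic_cert_identity:
  fixes q X Y :: complex
  assumes nz: "X \<noteq> 0" "1-q*X \<noteq> 0" "1-q*X^4 \<noteq> 0" "1-q^6*Y \<noteq> 0" "q^6*Y-X \<noteq> 0" "q^4*Y-X \<noteq> 0"
    "q^2*Y-X \<noteq> 0" "1-q^3*X^3*Y \<noteq> 0" "1-q^2*Y \<noteq> 0" "1-q^4*Y \<noteq> 0" "1-q^3*Y \<noteq> 0"
  shows "wz_cert_next q X Y * (q*X/(1-q*X)^2) - cert_scaled q X Y
           + f_shift q X Y * (q^3*Y/(1-q^3*Y)^2) - q^6*Y/(1-q^6*Y)^2 = 0"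
proof -
  define M where "M = X*(1-q*X)^2*(1-q*X^4)*(1-q^6*Y)^2*((q^6*Y-X)*(q^4*Y-X)*(q^2*Y-X))
                      *(1-q^3*X^3*Y)*(1-q^2*Y)*(1-q^4*Y)*(1-q^3*Y)^2"
  have "M \<noteq> 0"
    unfolding M_def using nz by simp
  have e3: "1-q^3*Y*X^3 = 1-q^3*X^3*Y"
    by (simp add: ac_simps)
  have t: "wz_cert_next q X Y * (q*X/(1-q*X)^2) * M
      = ((- (q^2*Y*(1-q^9*Y^2)*(1-q*X)^2*(1-q*X^2)*(1-q^3*X^2)*(q^6*Y-X^3)))*(q*X))
        * ((1-q^3*X^3*Y)*(1-q^2*Y)*(1-q^4*Y)*(1-q^3*Y)^2)"
    unfolding wz_cert_next_def times_divide_times_eq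
    by (rule divide_times_multiple, use nz in simp, simp only: M_def mult_ac power2_eq_square power3_eq_cube)
  have s: "cert_scaled q X Y * M
      = (- (q^4*Y*(1-q^9*Y^2)*(q^2-X^2)*(1-X^2)*X^2*(1-q^7*X*Y)))
        * (X*(1-q*X)^2*(q^2*Y-X)*(1-q^2*Y)*(1-q^4*Y)*(1-q^3*Y)^2)"
    unfolding cert_scaled_def
    by (rule divide_times_multiple, use nz in simp, simp only: M_def mult_ac power2_eq_square power3_eq_cube)
  have f: "f_shift q X Y * (q^3*Y/(1-q^3*Y)^2) * M
      = (((1-q^3*Y)*(q^6*Y-X^3)*((1-q^3*Y*X)*(1-q^5*Y*X)*(1-q^7*Y*X))*((q^4*Y-1)*(q^2*Y-1))*(1-q^3*Y))
          *(q^3*Y)) * (X*(1-q*X)^2*(1-q*X^4))"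
    unfolding f_shift_def e3 times_divide_times_eq
    by (rule divide_times_multiple, use nz in simp, simp only: M_def mult_ac power2_eq_square power3_eq_cube)
  have r: "q^6*Y/(1-q^6*Y)^2 * M
      = q^6*Y * (X*(1-q*X)^2*(1-q*X^4)*((q^6*Y-X)*(q^4*Y-X)*(q^2*Y-X))*(1-q^3*X^3*Y)
                 *(1-q^2*Y)*(1-q^4*Y)*(1-q^3*Y)^2)"
    by (rule divide_times_multiple, use nz in simp, simp only: M_def mult_ac power2_eq_square power3_eq_cube)
  have "(wz_cert_next q X Y * (q*X/(1-q*X)^2) - cert_scaled q X Y
           + f_shift q X Y * (q^3*Y/(1-q^3*Y)^2) - q^6*Y/(1-q^6*Y)^2) * M = 0"
    unfolding left_diff_distrib distrib_right t s f r by algebra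
  then show ?thesis
    using \<open>M \<noteq> 0\<close> by simp
qed

text \<open>
  For X and Y as above: u_ratio is wz_U q (Suc k) / wz_U q k, v_ratio is
  wz_V q (Suc n) (Suc k) / wz_V q (Suc n) k, v_shift is wz_V q n k / wz_V q (Suc n) k and
  c_ratio is wz_C q (Suc n) / wz_C q n.
\<close>

definition u_ratio :: "complex \<Rightarrow> complex \<Rightarrow> complex" where
  "u_ratio q X = q^2*(1-q^9*X^4)*((1-q*X)^2*(1-q*X^2)*(1-q^3*X^2))
                 / ((1-q*X^4)*((1-q^2*X^2)*(1-q^4*X^2)*(1-q^6*X^3)^2))"

definition v_ratio :: "complex \<Rightarrow> complex \<Rightarrow> complex \<Rightarrow> complex" where
  "v_ratio q X Y = ((1-q^9*Y*X^3)*(q^6*Y-X^3)) / ((1-q^9*Y*X)*(q^6*Y-X))"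

definition v_shift :: "complex \<Rightarrow> complex \<Rightarrow> complex \<Rightarrow> complex" where
  "v_shift q X Y =
     ((1-q^3*Y)*(q^6*Y-X^3)*((1-q^3*Y*X)*(1-q^5*Y*X)*(1-q^7*Y*X))*((q^6*Y-1)*(q^4*Y-1)*(q^2*Y-1)))
     / ((1-q^3*Y*X^3)*(q^6*Y-1)*((1-q^3*Y)*(1-q^5*Y)*(1-q^7*Y))*((q^6*Y-X)*(q^4*Y-X)*(q^2*Y-X)))"

definition c_ratio :: "complex \<Rightarrow> complex \<Rightarrow> complex" where
  "c_ratio q Y = ((1-q^3*Y)*(1-q^5*Y)*(1-q^7*Y)*(1-q^3*Y)) / ((1-q^2*Y)*(1-q^4*Y)*(1-q^6*Y)*(1-q^6*Y))"

lemma v_shift_times_c_ratio: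
  fixes q X Y :: complex
  assumes "1-q^3*Y \<noteq> 0" "q^6*Y-1 \<noteq> 0" "1-q^5*Y \<noteq> 0" "1-q^7*Y \<noteq> 0" "1-q^3*Y*X^3 \<noteq> 0"
    "q^6*Y-X \<noteq> 0" "q^4*Y-X \<noteq> 0" "q^2*Y-X \<noteq> 0" "1-q^2*Y \<noteq> 0" "1-q^4*Y \<noteq> 0" "1-q^6*Y \<noteq> 0"
  shows "v_shift q X Y * c_ratio q Y = f_shift q X Y"
proof -
  \<comment> \<open>Cancelling with the factors abstracted to variables keeps \<open>field_simps\<close> fast.\<close>
  have cancel: "(A*B*(P1*P2*P3)*(Q1*Q2*Q3)) / (C*Q1*(A*R5*R7)*(X1*X2*X3)) * ((A*R5*R7*A)/(E2*E4*E6*E6))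
      = (A*B*(P1*P2*P3)*(Q2*Q3)*A) / (C*(X1*X2*X3)*(E2*E4*E6^2))"
    if "A\<noteq>0" "Q1\<noteq>0" "R5\<noteq>0" "R7\<noteq>0" "C\<noteq>0" "X1\<noteq>0" "X2\<noteq>0" "X3\<noteq>0" "E2\<noteq>0" "E4\<noteq>0" "E6\<noteq>0"
    for A B P1 P2 P3 Q1 Q2 Q3 C R5 R7 X1 X2 X3 E2 E4 E6 :: complex
    using that by (simp add: field_simps power2_eq_square)
  show ?thesis
    unfolding v_shift_def c_ratio_def f_shift_def by (rule cancel[OF assms])
qed

lemma wz_cert_next_factor:
  fixes q X Y :: complex
  assumes nz: "q \<noteq> 0" "X \<noteq> 0" "1-q^9*X^4 \<noteq> 0" "1-q*X^4 \<noteq> 0" "1-q^2*X^2 \<noteq> 0" "1-q^4*X^2 \<noteq> 0"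
    "1-q^6*X^3 \<noteq> 0" "1-q^9*Y*X^3 \<noteq> 0" "1-q^9*Y*X \<noteq> 0" "q^6*Y-X \<noteq> 0" "1-q^6*Y \<noteq> 0"
    "q^4*Y-X \<noteq> 0" "q^2*Y-X \<noteq> 0"
  shows "u_ratio q X * v_ratio q X Y * wz_cert q (q^2*X) Y = wz_cert_next q X Y"
proof -
  have cancel: "q^2*a1*(a2^2*a3*a4)/(b1*(b2*b3*b4^2)) * ((c1*c2)/(d1*d2))
      * ((- (q^4*Y*e1*(q^2*b2)*b3*(q^4*X^2)*d1)) / (a1*e2^2*(q^2*e3)*(q^2*e4)*c1) * b4^2 / (q^6*X^3))
      = - (q^2*Y*e1*a2^2*a3*a4*c2) / (X*b1*d2*e2^2*e3*e4)"
    if "a1\<noteq>0" "b1\<noteq>0" "b2\<noteq>0" "b3\<noteq>0" "b4\<noteq>0" "c1\<noteq>0" "d1\<noteq>0" "d2\<noteq>0" "e2\<noteq>0" "e3\<noteq>0" "e4\<noteq>0"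
    for a1 a2 a3 a4 b1 b2 b3 b4 c1 c2 d1 d2 e1 e2 e3 e4 :: complex
    using that nz(1,2) by (simp add: field_simps power2_eq_square power3_eq_cube) (simp add: eval_nat_numeral)
  have "wz_cert q (q^2*X) Y
      = (- (q^4*Y*(1-q^9*Y^2)*(q^2*(1-q^2*X^2))*(1-q^4*X^2)*(q^4*X^2)*(1-q^9*Y*X)))
        / ((1-q^9*X^4)*(1-q^6*Y)^2*(q^2*(q^4*Y-X))*(q^2*(q^2*Y-X))*(1-q^9*Y*X^3))
        * (1-q^6*X^3)^2 / (q^6*X^3)"
  proof -
    have "(q^2*X)^2 = q^4*X^2" "(q^2*X)^3 = q^6*X^3" "q*(q^2*X)^4 = q^9*X^4" "q^7*(q^2*X)*Y = q^9*Y*X"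
      "q^3*(q^2*X)^3*Y = q^9*Y*X^3" "q^2 - q^4*X^2 = q^2*(1-q^2*X^2)" "q^6*Y - q^2*X = q^2*(q^4*Y-X)"
      "q^4*Y - q^2*X = q^2*(q^2*Y-X)"
      by algebra+
    then show ?thesis
      unfolding wz_cert_def cert_scaled_def by (simp only:)
  qed
  then show ?thesis
    unfolding u_ratio_def v_ratio_def wz_cert_next_def using nz(3-) by (simp only:) (rule cancel)
qed

definition wz_G :: "complex \<Rightarrow> nat \<Rightarrow> nat \<Rightarrow> complex" where
  "wz_G q n k = wz_F q (Suc n) k * wz_cert q (q^(2*k)) (q^(6*n))"

definition harm_term :: "complex \<Rightarrow> nat \<Rightarrow> complex" where
  "harm_term q m = q ^ m / (qint q m)^2"

definition harm_H :: "complex \<Rightarrow> nat \<Rightarrow> complex" where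
  "harm_H q k = (\<Sum>i=1..k. harm_term q (2*i-1) - harm_term q (6*i))"

definition harm_D :: "complex \<Rightarrow> nat \<Rightarrow> complex" where
  "harm_D q n = (\<Sum>j=1..2*n. (-1) ^ (j-1) * q ^ (3*j) / (qint q (3*j))^2)"

lemma harm_term_eq: "harm_term q m = (1-q)^2 * (q^m / (1-q^m)^2)"
  unfolding harm_term_def qint_def by (simp add: power_divide)

lemma harm_H_0: "harm_H q 0 = 0"
  unfolding harm_H_def by simp

lemma harm_H_Suc: "harm_H q (Suc k) = harm_H q k + harm_term q (2*k+1) - harm_term q (6*Suc k)"
  unfolding harm_H_def by (simp add: sum.cl_ivl_Suc)

lemma harm_D_Suc: "harm_D q (Suc n) = harm_D q n + harm_term q (6*n+3) - harm_term q (6*n+6)"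
proof -
  have "2*Suc n = Suc (Suc (2*n))" "3*Suc(2*n) = 6*n+3" "3*Suc(Suc(2*n)) = 6*n+6"
    by simp_all
  moreover have "(-1::complex)^(Suc (2*n) - 1) = 1" "(-1::complex)^(Suc (Suc (2*n)) - 1) = -1"
    by (simp_all add: power_mult)
  ultimately show ?thesis
    unfolding harm_D_def harm_term_def by (simp only: sum.cl_ivl_Suc) simp
qed

context
  fixes q :: complex
  assumes q_nonzero: "q \<noteq> 0" and q_norm_less_1: "cmod q < 1"
begin

lemma q_power_eq_iff [simp]: "q ^ a = q ^ b \<longleftrightarrow> a = b"
  by (rule power_eq_power_iff_norm_less_1[OF q_nonzero q_norm_less_1])

lemma q_power_eq_1_iff [simp]: "q ^ a = 1 \<longleftrightarrow> a = 0"
  using q_power_eq_iff[of a 0] by simp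

lemma q_neq_1: "q \<noteq> 1"
  using q_power_eq_1_iff[of 1] by simp

lemmas power_collect = power_mult[symmetric] power_add[symmetric]

lemma wz_C_nonzero: "wz_C q n \<noteq> 0"
  unfolding wz_C_def
  by (auto intro!: qpoch_nonzero simp: power_collect simp flip: power_Suc)

lemma wz_U_Suc: "wz_U q (Suc k) = wz_U q k * u_ratio q (q^(2*k))"
proof -
  define X where "X = q^(2*k)"
  define a where "a = qpoch q (q^2) k"
  define b where "b = qpoch q (q^2) (2*k)"
  define c where "c = qpoch (q^2) (q^2) (2*k)"
  define d where "d = qpoch (q^6) (q^6) k"
  have powers: "q*(q^2)^k = q*X" "q*(q^2)^(2*k) = q*X^2" "q*(q^2)^(Suc(2*k)) = q^3*X^2"
    "q^2*(q^2)^(2*k) = q^2*X^2" "q^2*(q^2)^(Suc(2*k)) = q^4*X^2" "q^6*(q^6)^k = q^6*X^3"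
    "q^(Suc (Suc (2*k))) = q^2*X" "q^(8*Suc k+1) = q^9*X^4" "q^(8*k+1) = q*X^4"
    unfolding X_def by (simp_all add: power_collect flip: power_Suc)
  have "2*Suc k = Suc(Suc(2*k))"
    by simp
  then have Suc_k: "wz_U q (Suc k) = (q^2*X) * ((1-q^9*X^4)/(1-q))
      * ((a*(1-q*X))^2 * (b*(1-q*X^2)*(1-q^3*X^2))) / ((c*(1-q^2*X^2)*(1-q^4*X^2)) * (d*(1-q^6*X^3))^2)"
    by (simp only: wz_U_def qint_def qpoch_Suc powers a_def b_def c_def d_def)
  have k: "wz_U q k = X * ((1-q*X^4)/(1-q)) * (a^2*b) / (c*d^2)"
    by (simp only: wz_U_def qint_def powers X_def[symmetric] a_def b_def c_def d_def)
  have nz: "1-q*X^4 \<noteq> 0" "c \<noteq> 0" "d \<noteq> 0" "1-q^2*X^2 \<noteq> 0" "1-q^4*X^2 \<noteq> 0" "1-q^6*X^3 \<noteq> 0"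
      "1-q \<noteq> 0"
    unfolding X_def c_def d_def using q_neq_1
    by (auto intro!: qpoch_nonzero simp: power_collect simp flip: power_Suc)
  have cancel: "(q^2*X) * (e/(1-q)) * ((a*al)^2 * (b*b1*b2)) / ((c*g1*g2) * (d*de)^2)
      = (X * (z/(1-q)) * (a^2*b) / (c*d^2)) * (q^2*e*(al^2*b1*b2)/(z*(g1*g2*de^2)))"
    if "z \<noteq> 0" "c \<noteq> 0" "d \<noteq> 0" "g1 \<noteq> 0" "g2 \<noteq> 0" "de \<noteq> 0" "1-q \<noteq> 0"
    for z e al b1 b2 g1 g2 de :: complex
    using that by (simp add: field_simps power2_eq_square)
  show ?thesis
    unfolding X_def[symmetric] Suc_k k u_ratio_def by (rule cancel[OF nz])
qed

lemma inverse_q_power_times_eq_1_iff: "inverse (q^m) * w = 1 \<longleftrightarrow> w = q^m"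
  using q_nonzero by (auto simp: field_simps)

lemma qpoch_inverse_q_power_nonzero:
  assumes "k \<le> Suc n"
  shows "qpoch (inverse (q^(6*Suc n))) (q^2) k \<noteq> 0"
proof (rule qpoch_nonzero)
  fix i assume "i < k"
  then show "inverse (q^(6*Suc n)) * (q^2)^i \<noteq> 1"
    using assms by (simp add: inverse_q_power_times_eq_1_iff power_collect flip: power_Suc)
qed

lemma wz_V_Suc:
  assumes "k \<le> Suc n"
  shows "wz_V q (Suc n) (Suc k) = wz_V q (Suc n) k * v_ratio q (q^(2*k)) (q^(6*n))"
proof -
  define X where "X = q^(2*k)"
  define Y where "Y = q^(6*n)"
  define c where "c = q^(3+6*Suc n)"
  define y where "y = inverse (q^(6*Suc n))"
  have Z: "q^(6*Suc n) = q^6*Y" "q^6*Y \<noteq> 0"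
    unfolding Y_def using q_nonzero by (simp_all add: power_collect flip: power_Suc)
  have powers: "c*(q^6)^k = q^9*Y*X^3" "c*(q^2)^k = q^9*Y*X" "(q^6)^k = X^3" "(q^2)^k = X"
    unfolding c_def X_def Y_def by (simp_all add: power_collect flip: power_Suc)
  have inv: "1 - y*(q^6)^k = (q^6*Y - X^3)/(q^6*Y)" "1 - y*(q^2)^k = (q^6*Y - X)/(q^6*Y)"
    unfolding y_def Z(1) powers using Z(2) q_nonzero by (simp_all add: field_simps)
  have nz: "qpoch c (q^2) k \<noteq> 0" "qpoch y (q^2) k \<noteq> 0" "1 - q^9*Y*X \<noteq> 0" "q^6*Y - X \<noteq> 0"
    unfolding c_def y_def X_def Y_def using assms qpoch_inverse_q_power_nonzero[OF assms]
    by (auto intro!: qpoch_nonzero simp: power_collect simp flip: power_Suc)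
  have cancel: "(A1*x1*(A2*(y2/Z)))/((A3*x3)*(A4*(y4/Z))) = (A1*A2)/(A3*A4) * ((x1*y2)/(x3*y4))"
    if "A3 \<noteq> 0" "A4 \<noteq> 0" "x3 \<noteq> 0" "y4 \<noteq> 0" "Z \<noteq> 0" for A1 A2 A3 A4 x1 x3 y2 y4 Z :: complex
    using that by (simp add: field_simps)
  have "wz_V q (Suc n) (Suc k)
      = (qpoch c (q^6) k * (1 - q^9*Y*X^3) * (qpoch y (q^6) k * ((q^6*Y - X^3)/(q^6*Y))))
        / ((qpoch c (q^2) k * (1 - q^9*Y*X)) * (qpoch y (q^2) k * ((q^6*Y - X)/(q^6*Y))))"
    by (simp only: wz_V_def c_def[symmetric] y_def[symmetric] qpoch_Suc powers(1,2) inv)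
  also have "\<dots> = wz_V q (Suc n) k * v_ratio q X Y"
    unfolding wz_V_def c_def[symmetric] y_def[symmetric] v_ratio_def by (rule cancel[OF nz Z(2)])
  finally show ?thesis
    by (simp only: X_def Y_def)
qed

lemma wz_C_Suc: "wz_C q (Suc n) = wz_C q n * c_ratio q (q^(6*n))"
proof -
  define Y where "Y = q^(6*n)"
  have "3*Suc n = Suc(Suc(Suc(3*n)))"
    by simp
  moreover have powers: "q^3*(q^2)^(3*n) = q^3*Y" "q^3*(q^2)^(Suc(3*n)) = q^5*Y"
    "q^3*(q^2)^(Suc(Suc(3*n))) = q^7*Y" "q^3*(q^6)^n = q^3*Y" "q^2*(q^2)^(3*n) = q^2*Y"
    "q^2*(q^2)^(Suc(3*n)) = q^4*Y" "q^2*(q^2)^(Suc(Suc(3*n))) = q^6*Y" "q^6*(q^6)^n = q^6*Y"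
    unfolding Y_def by (simp_all add: power_collect flip: power_Suc)
  ultimately have "wz_C q (Suc n)
      = (qpoch (q^3) (q^2) (3*n) * (1-q^3*Y) * (1-q^5*Y) * (1-q^7*Y) * (qpoch (q^3) (q^6) n * (1-q^3*Y)))
        / ((qpoch (q^2) (q^2) (3*n) * (1-q^2*Y) * (1-q^4*Y) * (1-q^6*Y)) * (qpoch (q^6) (q^6) n * (1-q^6*Y)))"
    by (simp only: wz_C_def qpoch_Suc)
  also have "\<dots> = wz_C q n * c_ratio q Y"
  proof -
    have nz: "qpoch (q^2) (q^2) (3*n) \<noteq> 0" "qpoch (q^6) (q^6) n \<noteq> 0"
        "1-q^2*Y \<noteq> 0" "1-q^4*Y \<noteq> 0" "1-q^6*Y \<noteq> 0"
      unfolding Y_def by (auto intro!: qpoch_nonzero simp: power_collect simp flip: power_Suc)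
    show ?thesis
      unfolding wz_C_def c_ratio_def using nz by (simp add: field_simps)
  qed
  finally show ?thesis
    by (simp only: Y_def)
qed

lemma wz_V_numerator_shift:
  assumes X: "X = q^(2*k)" and Y: "Y = q^(6*n)"
  shows "qpoch (q^(3+6*n)) (q^6) k * (1-q^3*Y*X^3) = qpoch (q^(3+6*Suc n)) (q^6) k * (1-q^3*Y)"
    and "qpoch (q^(3+6*Suc n)) (q^2) k * ((1-q^3*Y)*(1-q^5*Y)*(1-q^7*Y))
           = qpoch (q^(3+6*n)) (q^2) k * ((1-q^3*Y*X)*(1-q^5*Y*X)*(1-q^7*Y*X))"
proof -
  define c where "c = q^(3+6*n)"
  have c: "c = q^3*Y" "(q^6)^k = X^3" "(q^2)^k = X"
    unfolding c_def X Y by (simp_all add: power_collect flip: power_Suc)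
  have args: "c*(q^6)^1 = q^(3+6*Suc n)" "c*(q^2)^3 = q^(3+6*Suc n)"
    unfolding c_def by (simp_all add: power_collect flip: power_Suc)
  show "qpoch (q^(3+6*n)) (q^6) k * (1-q^3*Y*X^3) = qpoch (q^(3+6*Suc n)) (q^6) k * (1-q^3*Y)"
    using qpoch_swap[of c "q^6" k 1] c(1) unfolding c_def[symmetric] qpoch_1 args c(2,3) by algebra
  show "qpoch (q^(3+6*Suc n)) (q^2) k * ((1-q^3*Y)*(1-q^5*Y)*(1-q^7*Y))
           = qpoch (q^(3+6*n)) (q^2) k * ((1-q^3*Y*X)*(1-q^5*Y*X)*(1-q^7*Y*X))"
    using qpoch_swap[of c "q^2" k 3] c(1) unfolding c_def[symmetric] qpoch_3 args c(2,3) by algebra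
qed

lemma wz_V_denominator_shift:
  assumes X: "X = q^(2*k)" and Y: "Y = q^(6*n)"
  shows "qpoch (inverse (q^(6*n))) (q^6) k * (q^6*Y-1)
           = qpoch (inverse (q^(6*Suc n))) (q^6) k * (q^6*Y-X^3)"
    and "qpoch (inverse (q^(6*n))) (q^2) k * ((q^6*Y-1)*(q^4*Y-1)*(q^2*Y-1))
           = qpoch (inverse (q^(6*Suc n))) (q^2) k * ((q^6*Y-X)*(q^4*Y-X)*(q^2*Y-X))"
proof -
  define y where "y = inverse (q^(6*Suc n))"
  define w where "w = inverse (q^(6*n))"
  have y: "y * (q^6*Y) = 1" "(q^6)^k = X^3" "(q^2)^k = X"
    unfolding y_def X Y using q_nonzero by (simp_all add: field_simps power_collect flip: power_Suc)
  have args: "y*(q^6)^1 = w" "y*(q^2)^3 = w"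
    unfolding y_def w_def using q_nonzero by (simp_all add: field_simps power_add flip: power_mult)
  show "qpoch (inverse (q^(6*n))) (q^6) k * (q^6*Y-1)
          = qpoch (inverse (q^(6*Suc n))) (q^6) k * (q^6*Y-X^3)"
    using qpoch_swap[of y "q^6" k 1] y(1) unfolding y_def[symmetric] w_def[symmetric] qpoch_1 args y(2,3)
    by algebra
  show "qpoch (inverse (q^(6*n))) (q^2) k * ((q^6*Y-1)*(q^4*Y-1)*(q^2*Y-1))
          = qpoch (inverse (q^(6*Suc n))) (q^2) k * ((q^6*Y-X)*(q^4*Y-X)*(q^2*Y-X))"
    using qpoch_swap[of y "q^2" k 3] y(1) unfolding y_def[symmetric] w_def[symmetric] qpoch_3 args y(2,3)
    by algebra
qed

lemma wz_V_shift:
  assumes "k \<le> Suc n"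
  shows "wz_V q n k = wz_V q (Suc n) k * v_shift q (q^(2*k)) (q^(6*n))"
proof -
  define X where "X = q^(2*k)"
  define Y where "Y = q^(6*n)"
  note num = wz_V_numerator_shift[OF X_def Y_def]
  note den = wz_V_denominator_shift[OF X_def Y_def]
  have nz: "1-q^3*Y*X^3 \<noteq> 0" "q^6*Y-1 \<noteq> 0" "(1-q^3*Y*X)*(1-q^5*Y*X)*(1-q^7*Y*X) \<noteq> 0"
    "(q^6*Y-1)*(q^4*Y-1)*(q^2*Y-1) \<noteq> 0" "qpoch (q^(3+6*Suc n)) (q^2) k \<noteq> 0"
    "qpoch (inverse (q^(6*Suc n))) (q^2) k \<noteq> 0"
    unfolding X_def Y_def using qpoch_inverse_q_power_nonzero[OF assms]
    by (auto intro!: qpoch_nonzero simp: power_collect simp flip: power_Suc)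
  have cancel: "A1*A2/(A3*A4) = B1*B2/(B3*B4) * ((A*B*P*Q)/(C*Q1*R*QX))"
    if "A1 * C = B1 * A" "A2 * Q1 = B2 * B" "B3 * R = A3 * P" "A4 * Q = B4 * QX"
      and "C \<noteq> 0" "Q1 \<noteq> 0" "P \<noteq> 0" "Q \<noteq> 0" "B3 \<noteq> 0" "B4 \<noteq> 0"
    for A1 A2 A3 A4 B1 B2 B3 B4 A B P Q C Q1 R QX :: complex
  proof -
    have "A1 = B1*A/C" "A2 = B2*B/Q1" "A3 = B3*R/P" "A4 = B4*QX/Q"
      using that(1,5) that(2,6) that(3,7) that(4,8) by (simp_all add: field_simps)
    then show ?thesis
      using that(5-) by (simp only:) (simp add: field_simps)
  qed
  have "wz_V q n k = wz_V q (Suc n) k * v_shift q X Y"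
    unfolding wz_V_def v_shift_def by (rule cancel[OF num(1) den(1) num(2) den(2) nz])
  then show ?thesis
    by (simp only: X_def Y_def)
qed

lemma wz_F_Suc_Suc:
  assumes "k \<le> Suc n"
  shows "wz_F q (Suc n) (Suc k) = wz_F q (Suc n) k * (u_ratio q (q^(2*k)) * v_ratio q (q^(2*k)) (q^(6*n)))"
  unfolding wz_F_def wz_U_Suc wz_V_Suc[OF assms] by (simp add: mult_ac)

text \<open>
  For n = 0 and k = 1 the factor q^2 Y - X of the denominator of f_shift vanishes, so the WZ
  relations are only available for n \<ge> 1 and the inductions below start at n = 1.
\<close>

lemma wz_F_eq_shift:
  assumes "1 \<le> n" and "k \<le> Suc n"
  shows "wz_F q n k = wz_F q (Suc n) k * f_shift q (q^(2*k)) (q^(6*n))"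
proof -
  define X where "X = q^(2*k)"
  define Y where "Y = q^(6*n)"
  have nz: "1-q^3*Y \<noteq> 0" "q^6*Y-1 \<noteq> 0" "1-q^5*Y \<noteq> 0" "1-q^7*Y \<noteq> 0" "1-q^3*Y*X^3 \<noteq> 0"
    "q^6*Y-X \<noteq> 0" "q^4*Y-X \<noteq> 0" "q^2*Y-X \<noteq> 0" "1-q^2*Y \<noteq> 0" "1-q^4*Y \<noteq> 0" "1-q^6*Y \<noteq> 0"
    unfolding X_def Y_def using assms by (simp_all add: power_collect flip: power_Suc)
  have "c_ratio q Y \<noteq> 0"
    unfolding c_ratio_def using nz by simp
  have "wz_F q n k = wz_U q k * (wz_V q (Suc n) k * v_shift q X Y) / wz_C q n"
    unfolding wz_F_def wz_V_shift[OF assms(2)] X_def Y_def ..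
  also have "\<dots> = wz_U q k * wz_V q (Suc n) k / (wz_C q n * c_ratio q Y) * (v_shift q X Y * c_ratio q Y)"
    using \<open>c_ratio q Y \<noteq> 0\<close> wz_C_nonzero[of n] by (simp add: field_simps)
  also have "\<dots> = wz_F q (Suc n) k * f_shift q X Y"
    unfolding wz_F_def wz_C_Suc Y_def[symmetric] v_shift_times_c_ratio[OF nz] ..
  finally show ?thesis
    by (simp only: X_def Y_def)
qed

lemma wz_G_Suc:
  assumes "1 \<le> n" and "k \<le> Suc n"
  shows "wz_G q n (Suc k) = wz_F q (Suc n) k * wz_cert_next q (q^(2*k)) (q^(6*n))"
proof -
  define X where "X = q^(2*k)"
  define Y where "Y = q^(6*n)"
  have nz: "q \<noteq> 0" "X \<noteq> 0" "1-q^9*X^4 \<noteq> 0" "1-q*X^4 \<noteq> 0" "1-q^2*X^2 \<noteq> 0" "1-q^4*X^2 \<noteq> 0"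
    "1-q^6*X^3 \<noteq> 0" "1-q^9*Y*X^3 \<noteq> 0" "1-q^9*Y*X \<noteq> 0" "q^6*Y-X \<noteq> 0" "1-q^6*Y \<noteq> 0"
    "q^4*Y-X \<noteq> 0" "q^2*Y-X \<noteq> 0"
    unfolding X_def Y_def using assms q_nonzero by (simp_all add: power_collect flip: power_Suc)
  have "q^(2*Suc k) = q^2*X"
    unfolding X_def by (simp add: power_collect flip: power_Suc)
  then have "wz_G q n (Suc k) = wz_F q (Suc n) k * (u_ratio q X * v_ratio q X Y * wz_cert q (q^2*X) Y)"
    unfolding wz_G_def wz_F_Suc_Suc[OF assms(2)] X_def Y_def by (simp only: mult_ac)
  also have "\<dots> = wz_F q (Suc n) k * wz_cert_next q X Y"
    unfolding wz_cert_next_factor[OF nz] ..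
  finally show ?thesis
    by (simp only: X_def Y_def)
qed

lemma wz_pair:
  assumes "1 \<le> n" and "k \<le> Suc n"
  shows "wz_F q (Suc n) k - wz_F q n k = wz_G q n (Suc k) - wz_G q n k"
proof -
  define X where "X = q^(2*k)"
  define Y where "Y = q^(6*n)"
  have nz: "X \<noteq> 0" "1-q*X^4 \<noteq> 0" "1-q^6*Y \<noteq> 0" "q^6*Y-X \<noteq> 0" "q^4*Y-X \<noteq> 0" "q^2*Y-X \<noteq> 0"
    "1-q^3*X^3*Y \<noteq> 0" "1-q^2*Y \<noteq> 0" "1-q^4*Y \<noteq> 0"
    unfolding X_def Y_def using assms q_nonzero by (simp_all add: power_collect flip: power_Suc)
  have "wz_F q (Suc n) k - wz_F q n k = wz_F q (Suc n) k * (1 - f_shift q X Y)"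
    unfolding wz_F_eq_shift[OF assms] X_def Y_def by (simp add: algebra_simps)
  also have "\<dots> = wz_F q (Suc n) k * wz_cert_next q X Y - wz_F q (Suc n) k * wz_cert q X Y"
    unfolding wz_cert_identity[OF nz] by (simp add: algebra_simps)
  also have "\<dots> = wz_G q n (Suc k) - wz_G q n k"
    using wz_G_Suc[OF assms] wz_G_def[of q n k] by (simp add: X_def Y_def)
  finally show ?thesis .
qed

lemma wz_F_Suc_self: "wz_F q n (Suc n) = 0"
proof -
  have "qpoch (inverse (q ^ (6*n))) (q^6) (Suc n) = 0"
    by (rule qpoch_eq_0[of n]) (simp_all add: power_collect inverse_q_power_times_eq_1_iff flip: power_Suc)
  then show ?thesis
    unfolding wz_F_def wz_V_def by simp
qed

lemma wz_G_0: "wz_G q n 0 = 0"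
  unfolding wz_G_def wz_cert_def by simp

lemma wz_G_Suc_Suc_self: "wz_G q n (Suc (Suc n)) = 0"
  unfolding wz_G_def wz_F_Suc_self by simp

lemma wz_cert_times_harm_term:
  "wz_cert q (q^(2*k)) Y * harm_term q (6*k) = (1-q)^2 * cert_scaled q (q^(2*k)) Y"
proof (cases "k = 0")
  case True
  then show ?thesis
    unfolding wz_cert_def cert_scaled_def by simp
next
  case False
  define X where "X = q^(2*k)"
  have "X \<noteq> 0" "1 - X^3 \<noteq> 0" "q^(6*k) = X^3"
    unfolding X_def using False q_nonzero by (simp_all add: power_collect flip: power_Suc)
  then show ?thesis
    unfolding harm_term_eq X_def[symmetric] wz_cert_def by (simp add: field_simps)
qed

lemma wz_cert_harm_term_identity:
  assumes "1 \<le> n" and "k \<le> Suc n"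
  shows "wz_cert_next q (q^(2*k)) (q^(6*n)) * harm_term q (2*k+1)
           - wz_cert q (q^(2*k)) (q^(6*n)) * harm_term q (6*k)
           + f_shift q (q^(2*k)) (q^(6*n)) * harm_term q (6*n+3) - harm_term q (6*n+6) = 0"
proof -
  define X where "X = q^(2*k)"
  define Y where "Y = q^(6*n)"
  have nz: "X \<noteq> 0" "1-q*X \<noteq> 0" "1-q*X^4 \<noteq> 0" "1-q^6*Y \<noteq> 0" "q^6*Y-X \<noteq> 0" "q^4*Y-X \<noteq> 0"
    "q^2*Y-X \<noteq> 0" "1-q^3*X^3*Y \<noteq> 0" "1-q^2*Y \<noteq> 0" "1-q^4*Y \<noteq> 0" "1-q^3*Y \<noteq> 0"
    unfolding X_def Y_def using assms q_nonzero by (simp_all add: power_collect flip: power_Suc)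
  have "q^(2*k+1) = q*X" "q^(6*n+3) = q^3*Y" "q^(6*n+6) = q^6*Y"
    unfolding X_def Y_def by (simp_all add: power_collect flip: power_Suc)
  then have terms: "harm_term q (2*k+1) = (1-q)^2 * (q*X/(1-q*X)^2)"
    "harm_term q (6*n+3) = (1-q)^2 * (q^3*Y/(1-q^3*Y)^2)"
    "harm_term q (6*n+6) = (1-q)^2 * (q^6*Y/(1-q^6*Y)^2)"
    "wz_cert q X Y * harm_term q (6*k) = (1-q)^2 * cert_scaled q X Y"
    unfolding harm_term_eq X_def by (simp_all only: wz_cert_times_harm_term[unfolded harm_term_eq])
  have "wz_cert_next q X Y * harm_term q (2*k+1) - wz_cert q X Y * harm_term q (6*k)
          + f_shift q X Y * harm_term q (6*n+3) - harm_term q (6*n+6)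
        = (1-q)^2 * (wz_cert_next q X Y * (q*X/(1-q*X)^2) - cert_scaled q X Y
                     + f_shift q X Y * (q^3*Y/(1-q^3*Y)^2) - q^6*Y/(1-q^6*Y)^2)"
    unfolding terms by (simp add: algebra_simps)
  also have "\<dots> = 0"
    unfolding harmonic_cert_identity[OF nz] by simp
  finally show ?thesis
    unfolding X_def Y_def .
qed

lemma wz_harmonic_cert:
  assumes "1 \<le> n" and "k \<le> Suc n"
  shows "wz_G q n (Suc k) * harm_term q (2*k+1) - wz_G q n k * harm_term q (6*k)
           = wz_F q (Suc n) k * harm_term q (6*n+6) - wz_F q n k * harm_term q (6*n+3)"
proof -
  have "wz_G q n (Suc k) * harm_term q (2*k+1) - wz_G q n k * harm_term q (6*k)
          - (wz_F q (Suc n) k * harm_term q (6*n+6) - wz_F q n k * harm_term q (6*n+3))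
        = wz_F q (Suc n) k * (wz_cert_next q (q^(2*k)) (q^(6*n)) * harm_term q (2*k+1)
           - wz_cert q (q^(2*k)) (q^(6*n)) * harm_term q (6*k)
           + f_shift q (q^(2*k)) (q^(6*n)) * harm_term q (6*n+3) - harm_term q (6*n+6))"
    unfolding wz_G_Suc[OF assms] wz_G_def[of q n k] wz_F_eq_shift[OF assms]
    by (simp add: algebra_simps)
  then show ?thesis
    unfolding wz_cert_harm_term_identity[OF assms] by simp
qed

lemma wz_F_1_0: "wz_F q 1 0 = ((1-q^2)*(1-q^4)*(1-q^6)^2) / ((1-q^3)^2*(1-q^5)*(1-q^7))"
proof -
  have "wz_U q 0 = 1"
    unfolding wz_U_def qint_def using q_neq_1 by simp
  moreover have "wz_V q 1 0 = 1"
    unfolding wz_V_def by simp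
  moreover have "wz_C q 1 = c_ratio q 1"
    using wz_C_Suc[of 0] by (simp add: wz_C_def)
  ultimately show ?thesis
    unfolding wz_F_def c_ratio_def by (simp add: power2_eq_square mult_ac)
qed

lemma q_power_factors_nonzero:
  "1-q \<noteq> 0" "1-q^2 \<noteq> 0" "1-q^3 \<noteq> 0" "1-q^4 \<noteq> 0" "1-q^5 \<noteq> 0" "1-q^6 \<noteq> 0" "1-q^7 \<noteq> 0" "1-q^9 \<noteq> 0"
  using q_neq_1 by simp_all

lemma wz_F_1_1: "wz_F q 1 1 = (q^2*(1-q^9)*(1-q)^2) / ((1-q^3)*(1-q^5)*(1-q^7))"
proof -
  have "wz_F q 1 1 = wz_F q 1 0 * (u_ratio q 1 * v_ratio q 1 1)"
    using wz_F_Suc_Suc[of 0 0] by simp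
  moreover have "v_ratio q 1 1 = 1"
    unfolding v_ratio_def using q_power_factors_nonzero by (simp add: right_diff_distrib')
  ultimately have "wz_F q 1 1 = ((1-q^2)*(1-q^4)*(1-q^6)^2) * (q^2*(1-q^9)*((1-q)^2*(1-q)*(1-q^3)))
      / (((1-q^3)^2*(1-q^5)*(1-q^7)) * ((1-q)*((1-q^2)*(1-q^4)*(1-q^6)^2)))"
    unfolding wz_F_1_0 u_ratio_def by simp
  also have "\<dots> = (q^2*(1-q^9)*(1-q)^2) / ((1-q^3)*(1-q^5)*(1-q^7))"
  proof (rule frac_eq_eq[THEN iffD2])
    show "((1-q^2)*(1-q^4)*(1-q^6)^2) * (q^2*(1-q^9)*((1-q)^2*(1-q)*(1-q^3))) * ((1-q^3)*(1-q^5)*(1-q^7))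
        = (q^2*(1-q^9)*(1-q)^2) * (((1-q^3)^2*(1-q^5)*(1-q^7)) * ((1-q)*((1-q^2)*(1-q^4)*(1-q^6)^2)))"
      by algebra
  qed (use q_power_factors_nonzero in simp_all)
  finally show ?thesis .
qed

lemma wz_F_sum_1: "(\<Sum>k=0..1. wz_F q 1 k) = 1"
proof -
  have "(\<Sum>k=0..1. wz_F q 1 k) = wz_F q 1 0 + wz_F q 1 1"
    by (simp add: numeral_One)
  also have "\<dots> = (((1-q^2)*(1-q^4)*(1-q^6)^2) * ((1-q^3)*(1-q^5)*(1-q^7))
                    + (q^2*(1-q^9)*(1-q)^2) * ((1-q^3)^2*(1-q^5)*(1-q^7)))
                  / (((1-q^3)^2*(1-q^5)*(1-q^7)) * ((1-q^3)*(1-q^5)*(1-q^7)))"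
    unfolding wz_F_1_0 wz_F_1_1 by (rule add_frac_eq) (use q_power_factors_nonzero in simp_all)
  also have "((1-q^2)*(1-q^4)*(1-q^6)^2) * ((1-q^3)*(1-q^5)*(1-q^7))
               + (q^2*(1-q^9)*(1-q)^2) * ((1-q^3)^2*(1-q^5)*(1-q^7))
             = ((1-q^3)^2*(1-q^5)*(1-q^7)) * ((1-q^3)*(1-q^5)*(1-q^7))"
    by algebra
  finally show ?thesis
    using q_power_factors_nonzero by simp
qed

lemma wz_F_harm_sum_1: "(\<Sum>k=0..1. wz_F q 1 k * harm_H q k) = harm_D q 1"
proof -
  have "(\<Sum>k=0..1. wz_F q 1 k * harm_H q k) = wz_F q 1 1 * harm_H q 1"
    by (simp add: numeral_One harm_H_0)
  also have "harm_H q 1 = (q*(1-q^6)^2 - (1-q)^2*q^6) / (1-q^6)^2"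
    using harm_H_Suc[of q 0] q_power_factors_nonzero by (simp add: harm_H_0 harm_term_eq field_simps)
  also have "harm_D q 1 = ((1-q)^2*q^3*(1-q^6)^2 - (1-q)^2*q^6*(1-q^3)^2) / ((1-q^3)^2*(1-q^6)^2)"
    using harm_D_Suc[of q 0] q_power_factors_nonzero by (simp add: harm_D_def harm_term_eq field_simps)
  moreover have "wz_F q 1 1 * ((q*(1-q^6)^2 - (1-q)^2*q^6) / (1-q^6)^2)
      = (q^2*(1-q^9)*(1-q)^2) * (q*(1-q^6)^2 - (1-q)^2*q^6) / (((1-q^3)*(1-q^5)*(1-q^7)) * (1-q^6)^2)"
    unfolding wz_F_1_1 by simp
  moreover have "\<dots> = ((1-q)^2*q^3*(1-q^6)^2 - (1-q)^2*q^6*(1-q^3)^2) / ((1-q^3)^2*(1-q^6)^2)"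
  proof (rule frac_eq_eq[THEN iffD2])
    show "(q^2*(1-q^9)*(1-q)^2) * (q*(1-q^6)^2 - (1-q)^2*q^6) * ((1-q^3)^2*(1-q^6)^2)
        = ((1-q)^2*q^3*(1-q^6)^2 - (1-q)^2*q^6*(1-q^3)^2) * (((1-q^3)*(1-q^5)*(1-q^7)) * (1-q^6)^2)"
      by algebra
  qed (use q_power_factors_nonzero in simp_all)
  ultimately show ?thesis
    by simp
qed

lemma wz_F_sum:
  assumes "1 \<le> n"
  shows "(\<Sum>k=0..n. wz_F q n k) = 1"
  using assms
proof (induction n rule: nat_induct_at_least)
  case base
  show ?case
    by (rule wz_F_sum_1)
next
  case (Suc n)
  have "(\<Sum>k=0..Suc n. wz_F q (Suc n) k) = (\<Sum>k=0..n. wz_F q n k)"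
    by (rule wz_sum_Suc[of n "wz_F q" "wz_G q"])
       (simp_all add: wz_pair[OF Suc.hyps] wz_F_Suc_self wz_G_0 wz_G_Suc_Suc_self)
  with Suc.IH show ?case
    by simp
qed

lemma wz_F_harm_sum:
  assumes "1 \<le> n"
  shows "(\<Sum>k=0..n. wz_F q n k * harm_H q k) = harm_D q n"
  using assms
proof (induction n rule: nat_induct_at_least)
  case base
  show ?case
    by (rule wz_F_harm_sum_1)
next
  case (Suc n)
  have "(\<Sum>k=0..Suc n. wz_F q (Suc n) k * harm_H q k)
        = (\<Sum>k=0..n. wz_F q n k * harm_H q k)
          + (harm_term q (6*n+3) - harm_term q (6*n+6)) * (\<Sum>k=0..Suc n. wz_F q (Suc n) k)"
  proof (rule wz_weighted_sum_Suc[where G = "wz_G q" and b = "\<lambda>k. harm_term q (2*k+1)"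
                                    and a = "\<lambda>k. harm_term q (6*k)"])
    show "wz_F q (Suc n) k - wz_F q n k = wz_G q n (Suc k) - wz_G q n k" if "k \<le> Suc n" for k
      using Suc.hyps that by (rule wz_pair)
    show "wz_G q n (Suc k) * harm_term q (2*k+1) - wz_G q n k * harm_term q (6*k)
            = wz_F q (Suc n) k * harm_term q (6*n+6) - wz_F q n k * harm_term q (6*n+3)"
      if "k \<le> Suc n" for k
      using Suc.hyps that by (rule wz_harmonic_cert)
  qed (simp_all add: harm_H_Suc wz_F_Suc_self wz_G_0 wz_G_Suc_Suc_self)
  then show ?case
    using Suc.IH wz_F_sum[of "Suc n"] by (simp add: harm_D_Suc)
qed

lemma sum_wz_U_V_harm_H:
  assumes "1 \<le> n"
  shows "(\<Sum>k=1..n. wz_U q k * wz_V q n k * harm_H q k) = wz_C q n * harm_D q n"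
proof -
  have "(\<Sum>k=1..n. wz_U q k * wz_V q n k * harm_H q k) = (\<Sum>k=0..n. wz_U q k * wz_V q n k * harm_H q k)"
    by (simp add: sum.atLeast_Suc_atMost harm_H_0)
  also have "\<dots> = wz_C q n * (\<Sum>k=0..n. wz_F q n k * harm_H q k)"
    unfolding wz_F_def sum_distrib_left using wz_C_nonzero by (simp add: field_simps)
  finally show ?thesis
    unfolding wz_F_harm_sum[OF assms] .
qed

end

theorem mainTheorem11:
  fixes q :: complex and n :: nat
  assumes "n \<ge> 1" and "0 < cmod q" and "cmod q < 1"
  shows "(\<Sum>k=1..n. q ^ (2*k) * qint q (8*k+1)
            * (qpoch q (q^2) k ^ 2 * qpoch q (q^2) (2*k))
              / (qpoch (q^2) (q^2) (2*k) * qpoch (q^6) (q^6) k ^ 2)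
            * (qpoch (q ^ (3+6*n)) (q^6) k * qpoch (inverse (q ^ (6*n))) (q^6) k)
              / (qpoch (q ^ (3+6*n)) (q^2) k * qpoch (inverse (q ^ (6*n))) (q^2) k)
            * (\<Sum>i=1..k. q ^ (2*i-1) / (qint q (2*i-1))^2 - q ^ (6*i) / (qint q (6*i))^2))
       = (qpoch (q^3) (q^2) (3*n) * qpoch (q^3) (q^6) n)
           / (qpoch (q^2) (q^2) (3*n) * qpoch (q^6) (q^6) n)
         * (\<Sum>j=1..2*n. (-1) ^ (j-1) * q ^ (3*j) / (qint q (3*j))^2)"
proof -
  have "q \<noteq> 0"
    using assms(2) by auto
  from sum_wz_U_V_harm_H[OF this assms(3) assms(1)] show ?thesis
    unfolding wz_U_def wz_V_def wz_C_def harm_H_def harm_term_def harm_D_def times_divide_eq_right .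
qed

end
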